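(* Assume the travel times $\tau$ have a convex potential $\Phi$, all externality functions $g_{i,p,j}$ are constant, and let $B$ be a Pareto-minimal budget vector. Then a feasible flow $x\in\mathcal F$ is implementable and respects $B$ if and only if $x$ is an optimal solution of \[ \min_{y\in\mathcal F}\Phi(y)\quad\text{s.t.}\quad G_j(y)\le B_j\ \text{ for all } j\in J. \]
   Context: Let $G=(V,E)$ be a directed graph and $I$ a finite set of commodities; commodity $i$ has source $s_i$, sink $t_i$, demand $d_i>0$; $\mathcal P_i$ is its set of simple $s_i$–$t_i$ paths, $\mathcal P=\{(i,p)\}$. A flow $x\in\mathbb{R}^{\mathcal P}_{\ge0}$ is feasible if $\sum_{p\in\mathcal P_i}x_{i,p}=d_i$ for all $i$; $\mathcal F$ is the set of feasible flows. $J$ is a finite set of externality classes with constant externality factors $g_{i,p,j}\ge0$, $G_j(x)=\sum_{(i,p)}g_{i,p,j}x_{i,p}$; travel times $\tau_{i,p}:\mathcal F\to\mathbb{R}$ with a potential, i.e., a differentiable $\Phi:\mathbb{R}^{\mathcal P}\to\mathbb{R}$ with $\tau_{i,p}(x)=\partial\Phi/\partial x_{i,p}(x)$ on $\mathcal F$, here convex. For $\lambda\in\mathbb{R}^J_{\ge0}$, $c^\lambda_{i,p}=\tau_{i,p}+\sum_j\lambda_jg_{i,p,j}$; $x\in\mathrm{WE}(\lambda)$ means $x\in\mathcal F$ and $x_{i,p}>0$ implies $c^\lambda_{i,p}(x)\le c^\lambda_{i,q}(x)$ for all $q\in\mathcal P_i$. $x$ is implementable if $x\in\mathrm{WE}(\lambda)$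 for some $\lambda\in\mathbb{R}^J_{\ge0}$, and respects $B$ if $G_j(x)\le B_j$ for all $j$. A budget $B$ is feasible if some feasible flow respects it, and Pareto-minimal if it is feasible and no other feasible $B'\ne B$ has $B'_j\le B_j$ for all $j$. *)

theory Defs
  imports "HOL-Analysis.Analysis"
begin

definition simple_path :: "('v \<times> 'v) set \<Rightarrow> 'v \<Rightarrow> 'v \<Rightarrow> 'v list \<Rightarrow> bool" where
  "simple_path E s t p \<longleftrightarrow> p \<noteq> [] \<and> hd p = s \<and> last p = t \<and> distinct p \<and>
     (\<forall>k. Suc k < length p \<longrightarrow> (p ! k, p ! Suc k) \<in> E)"

definition paths :: "('v \<times> 'v) set \<Rightarrow> 'v \<Rightarrow> 'v \<Rightarrow> 'v list set" where
  "paths E s t = {p. simple_path E s t p}"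

definition Paths :: "('v \<times> 'v) set \<Rightarrow> 'i set \<Rightarrow> ('i \<Rightarrow> 'v) \<Rightarrow> ('i \<Rightarrow> 'v) \<Rightarrow> ('i \<times> 'v list) set" where
  "Paths E I s t = {(i, p). i \<in> I \<and> p \<in> paths E (s i) (t i)}"

text \<open>R^P: real vectors indexed by P, represented as functions vanishing outside P.\<close>
definition vecs :: "'a set \<Rightarrow> ('a \<Rightarrow> real) set" where
  "vecs P = {x. \<forall>q. q \<notin> P \<longrightarrow> x q = 0}"

definition feasible_flow ::
  "('v \<times> 'v) set \<Rightarrow> 'i set \<Rightarrow> ('i \<Rightarrow> 'v) \<Rightarrow> ('i \<Rightarrow> 'v) \<Rightarrow> ('i \<Rightarrow> real) \<Rightarrow> ('i \<times> 'v list \<Rightarrow> real) \<Rightarrow> bool" where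
  "feasible_flow E I s t d x \<longleftrightarrow> x \<in> vecs (Paths E I s t) \<and>
     (\<forall>q \<in> Paths E I s t. 0 \<le> x q) \<and>
     (\<forall>i \<in> I. (\<Sum>p \<in> paths E (s i) (t i). x (i, p)) = d i)"

definition Gext :: "('a \<times> 'b) set \<Rightarrow> ('a \<times> 'b \<Rightarrow> 'j \<Rightarrow> real) \<Rightarrow> 'j \<Rightarrow> ('a \<times> 'b \<Rightarrow> real) \<Rightarrow> real" where
  "Gext P g j x = (\<Sum>q \<in> P. g q j * x q)"

definition differentiable_vecs :: "'a set \<Rightarrow> (('a \<Rightarrow> real) \<Rightarrow> real) \<Rightarrow> ('a \<Rightarrow> real) \<Rightarrow> bool" where
  "differentiable_vecs P \<Phi> x \<longleftrightarrow> (\<exists>D. \<forall>\<epsilon>>0. \<exists>\<delta>>0. \<forall>y \<in> vecs P.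
      (\<Sum>q\<in>P. \<bar>y q - x q\<bar>) < \<delta> \<longrightarrow>
      \<bar>\<Phi> y - \<Phi> x - (\<Sum>q\<in>P. D q * (y q - x q))\<bar> \<le> \<epsilon> * (\<Sum>q\<in>P. \<bar>y q - x q\<bar>))"

definition has_partial_deriv :: "(('a \<Rightarrow> real) \<Rightarrow> real) \<Rightarrow> 'a \<Rightarrow> ('a \<Rightarrow> real) \<Rightarrow> real \<Rightarrow> bool" where
  "has_partial_deriv \<Phi> q x v \<longleftrightarrow> ((\<lambda>h. \<Phi> (x(q := x q + h))) has_real_derivative v) (at 0)"

definition convex_vecs :: "'a set \<Rightarrow> (('a \<Rightarrow> real) \<Rightarrow> real) \<Rightarrow> bool" where
  "convex_vecs P \<Phi> \<longleftrightarrow> (\<forall>x \<in> vecs P. \<forall>y \<in> vecs P. \<forall>u::real. 0 \<le> u \<and> u \<le> 1 \<longrightarrow>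
      \<Phi> (\<lambda>q. u * x q + (1 - u) * y q) \<le> u * \<Phi> x + (1 - u) * \<Phi> y)"

definition cost :: "'j set \<Rightarrow> ('q \<Rightarrow> ('q \<Rightarrow> real) \<Rightarrow> real) \<Rightarrow> ('q \<Rightarrow> 'j \<Rightarrow> real) \<Rightarrow> ('j \<Rightarrow> real)
     \<Rightarrow> 'q \<Rightarrow> ('q \<Rightarrow> real) \<Rightarrow> real" where
  "cost J \<tau> g lam q x = \<tau> q x + (\<Sum>j \<in> J. lam j * g q j)"

definition WE where
  "WE E I s t d J \<tau> g lam x \<longleftrightarrow> feasible_flow E I s t d x \<and>
     (\<forall>i \<in> I. \<forall>p \<in> paths E (s i) (t i). x (i, p) > 0 \<longrightarrow>
        (\<forall>p' \<in> paths E (s i) (t i). cost J \<tau> g lam (i, p) x \<le> cost J \<tau> g lam (i, p') x))"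

definition implementable where
  "implementable E I s t d J \<tau> g x \<longleftrightarrow>
     (\<exists>lam. (\<forall>j \<in> J. 0 \<le> lam j) \<and> WE E I s t d J \<tau> g lam x)"

definition respects_budget where
  "respects_budget E I s t J g B x \<longleftrightarrow> (\<forall>j \<in> J. Gext (Paths E I s t) g j x \<le> B j)"

definition feasible_budget where
  "feasible_budget E I s t d J g B \<longleftrightarrow> (\<exists>x. feasible_flow E I s t d x \<and> respects_budget E I s t J g B x)"

text \<open>Budgets are vectors in R^J; only their components on J matter.\<close>
definition pareto_minimal where
  "pareto_minimal E I s t d J g B \<longleftrightarrow> feasible_budget E I s t d J g B \<and>
     \<not> (\<exists>B'. feasible_budget E I s t d J g B' \<and> (\<exists>j \<in> J. B' j \<noteq> B j) \<and> (\<forall>j \<in> J. B' j \<le> B j))"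

definition optimal_budget_solution where
  "optimal_budget_solution E I s t d J g B \<Phi> x \<longleftrightarrow>
     feasible_flow E I s t d x \<and> respects_budget E I s t J g B x \<and>
     (\<forall>y. feasible_flow E I s t d y \<and> respects_budget E I s t J g B y \<longrightarrow> \<Phi> x \<le> \<Phi> y)"

end

theory Submission
  imports Defs
begin

(* Both directions compare the Wardrop conditions with the KKT conditions of the
   budget-constrained potential minimisation.  If x is in WE(lambda) and respects B, then
   Pareto-minimality of B forces G_j(x) = B_j; hence for every admissible y the equilibrium
   inequality sum c^lambda(x) (y - x) >= 0 gives grad Phi(x) . (y - x) >=
   sum_j lambda_j (B_j - G_j(y)) >= 0, and convexity of Phi yields Phi(y) >= Phi(x).
   Conversely, at a minimiser grad Phi(x) . z >= 0 on the cone of feasible directions, and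
   Farkas' lemma turns this into multipliers lambda >= 0 for the budgets and mu_i for the
   demands with c^lambda_(i,p)(x) >= mu_i, with equality on used paths, i.e. x is in WE(lambda). *)

definition proj_along :: "'q set \<Rightarrow> ('q \<Rightarrow> real) \<Rightarrow> ('q \<Rightarrow> real) \<Rightarrow> ('q \<Rightarrow> real) \<Rightarrow> 'q \<Rightarrow> real"
  where "proj_along P u w v q = v q - (\<Sum>r\<in>P. v r * w r) / (\<Sum>r\<in>P. u r * w r) * u q"

lemma sum_diff_scaled_mult:
  fixes v u z :: "'q \<Rightarrow> real"
  shows "(\<Sum>q\<in>P. (v q - r * u q) * z q) = (\<Sum>q\<in>P. v q * z q) - r * (\<Sum>q\<in>P. u q * z q)"
  by (simp add: left_diff_distrib sum_subtractf sum_distrib_left mult.assoc)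

lemma sum_proj_along_adjoint:
  "(\<Sum>q\<in>P. proj_along P u w v q * z q) = (\<Sum>q\<in>P. v q * proj_along P w u z q)"
proof -
  have "(\<Sum>q\<in>P. v q * proj_along P w u z q) = (\<Sum>q\<in>P. proj_along P w u z q * v q)"
    by (simp add: mult.commute)
  then show ?thesis
    unfolding proj_along_def sum_diff_scaled_mult by (simp add: mult.commute)
qed

lemma sum_proj_along_orthogonal:
  assumes "(\<Sum>r\<in>P. u r * w r) \<noteq> 0"
  shows "(\<Sum>q\<in>P. u q * proj_along P w u z q) = 0"
proof -
  have "(\<Sum>q\<in>P. u q * proj_along P w u z q) = (\<Sum>q\<in>P. proj_along P w u z q * u q)"
    by (simp add: mult.commute)
  then show ?thesis
    using assms unfolding proj_along_def sum_diff_scaled_mult by (simp add: mult.commute)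
qed

lemma proj_along_lift:
  fixes l :: "'k \<Rightarrow> real" and a :: "'k \<Rightarrow> 'q \<Rightarrow> real"
  assumes "\<forall>q\<in>P. proj_along P u w c q = (\<Sum>k\<in>K. l k * proj_along P u w (a k) q)" and "q \<in> P"
  shows "c q = ((\<Sum>r\<in>P. c r * w r) - (\<Sum>k\<in>K. l k * (\<Sum>r\<in>P. a k r * w r))) / (\<Sum>r\<in>P. u r * w r) * u q
    + (\<Sum>k\<in>K. l k * a k q)"
proof -
  have lin: "(\<Sum>k\<in>K. l k * (A k - X k / m * U)) = (\<Sum>k\<in>K. l k * A k) - (\<Sum>k\<in>K. l k * X k) / m * U"
    for A X :: "'k \<Rightarrow> real" and m U :: real
    by (simp add: right_diff_distrib sum_subtractf sum_divide_distrib sum_distrib_right mult.assoc)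
  show ?thesis
    using assms unfolding proj_along_def lin by (simp add: diff_divide_distrib algebra_simps)
qed
lemma homogeneous_farkas:
  fixes a :: "'k \<Rightarrow> 'q \<Rightarrow> real" and c :: "'q \<Rightarrow> real"
  assumes "finite K" and finP: "finite P"
    and "\<And>z. \<forall>k\<in>K. 0 \<le> (\<Sum>q\<in>P. a k q * z q) \<Longrightarrow> 0 \<le> (\<Sum>q\<in>P. c q * z q)"
  shows "\<exists>l. (\<forall>k\<in>K. 0 \<le> l k) \<and> (\<forall>q\<in>P. c q = (\<Sum>k\<in>K. l k * a k q))"
  using assms(1,3)
proof (induction K arbitrary: a c rule: finite_induct)
  case empty
  have "0 \<le> (\<Sum>q\<in>P. c q * - c q)"
    using empty.prems[of "\<lambda>q. - c q"] by simp
  then have "(\<Sum>q\<in>P. c q * c q) = 0"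
    by (simp add: sum_negf) (meson antisym sum_nonneg zero_le_square)
  then show ?case
    by (simp add: sum_nonneg_eq_0_iff[OF finP])
next
  case (insert k K)
  show ?case
  proof (cases "\<forall>z. (\<forall>k'\<in>K. 0 \<le> (\<Sum>q\<in>P. a k' q * z q)) \<longrightarrow> 0 \<le> (\<Sum>q\<in>P. c q * z q)")
    case True
    with insert.IH obtain l where "\<forall>k\<in>K. 0 \<le> l k" "\<forall>q\<in>P. c q = (\<Sum>k\<in>K. l k * a k q)"
      by blast
    with insert.hyps show ?thesis
      by (intro exI[of _ "l(k := 0)"]) (auto intro!: sum.cong)
  next
    case False
    then obtain w where w_K: "\<forall>k'\<in>K. 0 \<le> (\<Sum>q\<in>P. a k' q * w q)"
      and cw: "(\<Sum>q\<in>P. c q * w q) < 0"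
      by force
    define m where "m = (\<Sum>q\<in>P. a k q * w q)"
    have "m < 0"
      using insert.prems[of w] w_K cw unfolding m_def by force
    \<comment> \<open>Fourier-Motzkin: projecting along a k onto the hyperplane orthogonal to w eliminates k.\<close>
    have "0 \<le> (\<Sum>q\<in>P. proj_along P (a k) w c q * z q)"
      if "\<forall>k'\<in>K. 0 \<le> (\<Sum>q\<in>P. proj_along P (a k) w (a k') q * z q)" for z
      using that insert.prems[of "proj_along P w (a k) z"] \<open>m < 0\<close>
      by (simp add: sum_proj_along_adjoint sum_proj_along_orthogonal m_def)
    from insert.IH[of "\<lambda>k'. proj_along P (a k) w (a k')", OF this]
    obtain l where l_nonneg: "\<forall>k\<in>K. 0 \<le> l k"
      and proj_c: "\<forall>q\<in>P. proj_along P (a k) w c q = (\<Sum>k'\<in>K. l k' * proj_along P (a k) w (a k') q)"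
      by blast
    define \<mu> where "\<mu> = ((\<Sum>r\<in>P. c r * w r) - (\<Sum>k'\<in>K. l k' * (\<Sum>r\<in>P. a k' r * w r))) / m"
    have "0 \<le> (\<Sum>k'\<in>K. l k' * (\<Sum>r\<in>P. a k' r * w r))"
      using l_nonneg w_K by (intro sum_nonneg) auto
    then have "0 \<le> \<mu>"
      unfolding \<mu>_def using cw \<open>m < 0\<close> by (simp add: divide_nonpos_neg)
    have "c q = \<mu> * a k q + (\<Sum>k'\<in>K. l k' * a k' q)" if "q \<in> P" for q
      using proj_along_lift[OF proj_c that] by (simp add: \<mu>_def m_def)
    with insert.hyps l_nonneg \<open>0 \<le> \<mu>\<close> show ?thesis
      by (intro exI[of _ "l(k := \<mu>)"]) (auto intro!: sum.cong)
  qed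
qed

lemma farkas_with_equalities:
  fixes a :: "'k \<Rightarrow> 'q \<Rightarrow> real" and b :: "'m \<Rightarrow> 'q \<Rightarrow> real" and c :: "'q \<Rightarrow> real"
  assumes finK: "finite K" and finM: "finite M" and finP: "finite P"
    and cone: "\<And>z. \<forall>k\<in>K. 0 \<le> (\<Sum>q\<in>P. a k q * z q) \<Longrightarrow> \<forall>m\<in>M. (\<Sum>q\<in>P. b m q * z q) = 0
      \<Longrightarrow> 0 \<le> (\<Sum>q\<in>P. c q * z q)"
  shows "\<exists>l \<mu>. (\<forall>k\<in>K. 0 \<le> l k) \<and>
    (\<forall>q\<in>P. c q = (\<Sum>k\<in>K. l k * a k q) + (\<Sum>m\<in>M. \<mu> m * b m q))"
proof -
  define a' where "a' = case_sum a (case_sum b (\<lambda>m q. - b m q))"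
  have "0 \<le> (\<Sum>q\<in>P. c q * z q)" if "\<forall>k'\<in>K <+> (M <+> M). 0 \<le> (\<Sum>q\<in>P. a' k' q * z q)" for z
  proof (rule cone)
    show "\<forall>k\<in>K. 0 \<le> (\<Sum>q\<in>P. a k q * z q)"
      using that by (auto simp: a'_def dest!: bspec[where x = "Inl _"])
    show "\<forall>m\<in>M. (\<Sum>q\<in>P. b m q * z q) = 0"
    proof
      fix m assume "m \<in> M"
      then have "0 \<le> (\<Sum>q\<in>P. b m q * z q)" "0 \<le> (\<Sum>q\<in>P. - b m q * z q)"
        using that[rule_format, of "Inr (Inl m)"] that[rule_format, of "Inr (Inr m)"]
        by (auto simp: a'_def)
      then show "(\<Sum>q\<in>P. b m q * z q) = 0"
        by (simp add: sum_negf)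
    qed
  qed
  with homogeneous_farkas[of "K <+> (M <+> M)" P a' c] finK finM finP
  obtain l where l_nonneg: "\<forall>k'\<in>K <+> (M <+> M). 0 \<le> l k'"
    and c_eq: "\<forall>q\<in>P. c q = (\<Sum>k'\<in>K <+> (M <+> M). l k' * a' k' q)"
    by auto
  have "c q = (\<Sum>k\<in>K. l (Inl k) * a k q) + (\<Sum>m\<in>M. (l (Inr (Inl m)) - l (Inr (Inr m))) * b m q)"
    if "q \<in> P" for q
    using c_eq that finK finM
    by (simp add: sum.Plus a'_def left_diff_distrib sum_subtractf sum_negf)
  with l_nonneg show ?thesis
    by (intro exI[of _ "l \<circ> Inl"] exI[of _ "\<lambda>m. l (Inr (Inl m)) - l (Inr (Inr m))"]) auto
qed

definition has_gradient_vecs :: "'a set \<Rightarrow> (('a \<Rightarrow> real) \<Rightarrow> real) \<Rightarrow> ('a \<Rightarrow> real) \<Rightarrow> ('a \<Rightarrow> real) \<Rightarrow> bool"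
  where "has_gradient_vecs P \<Phi> x D \<longleftrightarrow> (\<forall>\<epsilon>>0. \<exists>\<delta>>0. \<forall>y \<in> vecs P.
      (\<Sum>q\<in>P. \<bar>y q - x q\<bar>) < \<delta> \<longrightarrow>
      \<bar>\<Phi> y - \<Phi> x - (\<Sum>q\<in>P. D q * (y q - x q))\<bar> \<le> \<epsilon> * (\<Sum>q\<in>P. \<bar>y q - x q\<bar>))"

lemma differentiable_vecs_iff_has_gradient:
  "differentiable_vecs P \<Phi> x \<longleftrightarrow> (\<exists>D. has_gradient_vecs P \<Phi> x D)"
  unfolding differentiable_vecs_def has_gradient_vecs_def ..

lemma has_gradient_vecs_directional_derivative:
  assumes "has_gradient_vecs P \<Phi> x D" and "x \<in> vecs P" and "w \<in> vecs P"
  shows "((\<lambda>h. \<Phi> (\<lambda>q. x q + h * w q)) has_real_derivative (\<Sum>q\<in>P. D q * w q)) (at 0)"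
  unfolding has_field_derivative_iff
proof (rule LIM_I)
  fix r :: real
  assume "0 < r"
  define N where "N = (\<Sum>q\<in>P. \<bar>w q\<bar>)"
  have "0 \<le> N"
    unfolding N_def by (simp add: sum_nonneg)
  obtain \<delta> where "0 < \<delta>" and \<delta>: "\<And>y. y \<in> vecs P \<Longrightarrow> (\<Sum>q\<in>P. \<bar>y q - x q\<bar>) < \<delta> \<Longrightarrow>
      \<bar>\<Phi> y - \<Phi> x - (\<Sum>q\<in>P. D q * (y q - x q))\<bar> \<le> r / (2 * (N + 1)) * (\<Sum>q\<in>P. \<bar>y q - x q\<bar>)"
  proof -
    have "0 < r / (2 * (N + 1))"
      using \<open>0 < r\<close> \<open>0 \<le> N\<close> by simp
    with assms(1) show thesis
      using that unfolding has_gradient_vecs_def by blast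
  qed
  show "\<exists>s>0. \<forall>h. h \<noteq> 0 \<and> norm (h - 0) < s \<longrightarrow>
      norm ((\<Phi> (\<lambda>q. x q + h * w q) - \<Phi> (\<lambda>q. x q + 0 * w q)) / (h - 0) - (\<Sum>q\<in>P. D q * w q)) < r"
  proof (intro exI[of _ "\<delta> / (N + 1)"] conjI allI impI)
    show "0 < \<delta> / (N + 1)"
      using \<open>0 < \<delta>\<close> \<open>0 \<le> N\<close> by simp
    fix h :: real
    assume h: "h \<noteq> 0 \<and> norm (h - 0) < \<delta> / (N + 1)"
    have "\<bar>h\<bar> * N \<le> \<bar>h\<bar> * (N + 1)"
      by (simp add: mult_left_mono)
    also have "\<dots> < \<delta>"
      using h \<open>0 \<le> N\<close> by (simp add: less_divide_eq mult.commute)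
    finally have "\<bar>h\<bar> * N < \<delta>" .
    moreover have "(\<lambda>q. x q + h * w q) \<in> vecs P"
      using assms(2,3) by (simp add: vecs_def)
    ultimately have "\<bar>\<Phi> (\<lambda>q. x q + h * w q) - \<Phi> x - h * (\<Sum>q\<in>P. D q * w q)\<bar>
        \<le> r / (2 * (N + 1)) * (\<bar>h\<bar> * N)"
      using \<delta>[of "\<lambda>q. x q + h * w q"]
      by (simp add: N_def abs_mult sum_distrib_left mult.left_commute)
    also have "\<dots> < r * \<bar>h\<bar>"
      using h \<open>0 < r\<close> \<open>0 \<le> N\<close> by (simp add: field_simps add_nonneg_pos)
    finally show "norm ((\<Phi> (\<lambda>q. x q + h * w q) - \<Phi> (\<lambda>q. x q + 0 * w q)) / (h - 0)
        - (\<Sum>q\<in>P. D q * w q)) < r"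
      using h by (simp add: field_simps abs_divide)
  qed
qed

lemma has_gradient_vecs_partial_deriv:
  assumes "has_gradient_vecs P \<Phi> x D" and "x \<in> vecs P" and "q \<in> P" and "finite P"
  shows "has_partial_deriv \<Phi> q x (D q)"
proof -
  define e where "e r = (if r = q then 1 else 0 :: real)" for r
  have "e \<in> vecs P"
    using \<open>q \<in> P\<close> by (simp add: vecs_def e_def)
  then have "((\<lambda>h. \<Phi> (\<lambda>r. x r + h * e r)) has_real_derivative (\<Sum>r\<in>P. D r * e r)) (at 0)"
    by (rule has_gradient_vecs_directional_derivative[OF assms(1,2)])
  moreover have "(\<lambda>r. x r + h * e r) = x(q := x q + h)" for h
    by (auto simp: e_def)
  moreover have "(\<Sum>r\<in>P. D r * e r) = D q"
    using assms(3,4) by (simp add: e_def if_distrib cong: if_cong)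
  ultimately show ?thesis
    unfolding has_partial_deriv_def by simp
qed

lemma has_gradient_vecs_segment_quotient:
  assumes "has_gradient_vecs P \<Phi> x D" and "x \<in> vecs P" and "y \<in> vecs P"
  shows "((\<lambda>u. (\<Phi> (\<lambda>q. u * y q + (1 - u) * x q) - \<Phi> x) / u)
    \<longlongrightarrow> (\<Sum>q\<in>P. D q * (y q - x q))) (at_right 0)"
proof -
  have "(\<lambda>q. y q - x q) \<in> vecs P"
    using assms(2,3) by (simp add: vecs_def)
  then have "((\<lambda>u. \<Phi> (\<lambda>q. x q + u * (y q - x q))) has_real_derivative
      (\<Sum>q\<in>P. D q * (y q - x q))) (at_right 0)"
    using has_gradient_vecs_directional_derivative[OF assms(1,2)] has_field_derivative_at_within
    by blast
  moreover have "(\<lambda>q. x q + u * (y q - x q)) = (\<lambda>q. u * y q + (1 - u) * x q)" for u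
    by (simp add: algebra_simps)
  ultimately show ?thesis
    by (simp add: has_field_derivative_iff)
qed

lemma convex_vecs_gradient_inequality:
  assumes "convex_vecs P \<Phi>" and "has_gradient_vecs P \<Phi> x D" and "x \<in> vecs P" and "y \<in> vecs P"
  shows "(\<Sum>q\<in>P. D q * (y q - x q)) \<le> \<Phi> y - \<Phi> x"
proof (rule tendsto_upperbound[OF has_gradient_vecs_segment_quotient[OF assms(2-4)]])
  have "(\<Phi> (\<lambda>q. u * y q + (1 - u) * x q) - \<Phi> x) / u \<le> \<Phi> y - \<Phi> x" if "0 < u" "u \<le> 1" for u
  proof -
    define z where "z = (\<lambda>q. u * y q + (1 - u) * x q)"
    have "\<Phi> z \<le> u * \<Phi> y + (1 - u) * \<Phi> x"
      using assms(1,3,4) that unfolding convex_vecs_def z_def by simp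
    then have "\<Phi> z - \<Phi> x \<le> (\<Phi> y - \<Phi> x) * u"
      by (simp add: algebra_simps)
    then show ?thesis
      using that unfolding z_def[symmetric] by (simp add: pos_divide_le_eq)
  qed
  then show "\<forall>\<^sub>F u in at_right 0. (\<Phi> (\<lambda>q. u * y q + (1 - u) * x q) - \<Phi> x) / u \<le> \<Phi> y - \<Phi> x"
    unfolding eventually_at_right_field by (intro exI[of _ 1]) auto
qed simp

lemma gradient_nonneg_if_segment_minimum:
  assumes "has_gradient_vecs P \<Phi> x D" and "x \<in> vecs P" and "y \<in> vecs P"
    and "\<And>u. 0 < u \<Longrightarrow> u \<le> 1 \<Longrightarrow> \<Phi> x \<le> \<Phi> (\<lambda>q. u * y q + (1 - u) * x q)"
  shows "0 \<le> (\<Sum>q\<in>P. D q * (y q - x q))"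
proof (rule tendsto_lowerbound[OF has_gradient_vecs_segment_quotient[OF assms(1-3)]])
  show "\<forall>\<^sub>F u in at_right 0. 0 \<le> (\<Phi> (\<lambda>q. u * y q + (1 - u) * x q) - \<Phi> x) / u"
    unfolding eventually_at_right_field using assms(4) by (intro exI[of _ 1]) auto
qed simp

lemma simple_path_subset_vertices:
  assumes "simple_path E s t p" and "s \<in> V" and "E \<subseteq> V \<times> V"
  shows "set p \<subseteq> V"
proof
  fix v
  assume "v \<in> set p"
  then obtain k where k: "k < length p" "v = p ! k"
    by (auto simp: in_set_conv_nth)
  show "v \<in> V"
  proof (cases k)
    case 0
    then show ?thesis
      using assms(1,2) k by (auto simp: simple_path_def hd_conv_nth)
  next
    case (Suc k')
    then have "(p ! k', p ! k) \<in> E"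
      using assms(1) k unfolding simple_path_def by auto
    then show ?thesis
      using assms(3) k by auto
  qed
qed

lemma finite_paths:
  assumes "finite V" and "E \<subseteq> V \<times> V" and "s \<in> V"
  shows "finite (paths E s t)"
proof (rule finite_subset)
  show "paths E s t \<subseteq> {p. set p \<subseteq> V \<and> length p \<le> card V}"
  proof
    fix p
    assume "p \<in> paths E s t"
    then have "simple_path E s t p"
      by (simp add: paths_def)
    then have "set p \<subseteq> V" and "distinct p"
      using simple_path_subset_vertices[OF _ assms(3,2)] by (auto simp: simple_path_def)
    then show "p \<in> {p. set p \<subseteq> V \<and> length p \<le> card V}"
      using assms(1) by (simp add: card_mono flip: distinct_card)
  qed
  show "finite {p. set p \<subseteq> V \<and> length p \<le> card V}"
    using assms(1) by (rule finite_lists_length_le)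
qed

lemma Paths_eq_Sigma: "Paths E I s t = Sigma I (\<lambda>i. paths E (s i) (t i))"
  unfolding Paths_def by auto

lemma Gext_linear:
  "Gext P g j (\<lambda>q. a * y q + b * x q) = a * Gext P g j y + b * Gext P g j x"
  unfolding Gext_def by (simp add: distrib_left sum.distrib sum_distrib_left mult.left_commute)

lemma feasible_flow_convex_combination:
  assumes "feasible_flow E I s t d x" and "feasible_flow E I s t d y" and "0 \<le> u" and "u \<le> 1"
  shows "feasible_flow E I s t d (\<lambda>q. u * y q + (1 - u) * x q)"
  using assms unfolding feasible_flow_def vecs_def
  by (auto simp: sum.distrib simp flip: sum_distrib_left; simp add: algebra_simps)

lemma respects_budget_convex_combination:
  assumes "respects_budget E I s t J g B x" and "respects_budget E I s t J g B y"
    and "0 \<le> u" and "u \<le> 1"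
  shows "respects_budget E I s t J g B (\<lambda>q. u * y q + (1 - u) * x q)"
  unfolding respects_budget_def Gext_linear
proof
  fix j
  assume "j \<in> J"
  then have "u * Gext (Paths E I s t) g j y \<le> u * B j"
    and "(1 - u) * Gext (Paths E I s t) g j x \<le> (1 - u) * B j"
    using assms unfolding respects_budget_def by (auto intro: mult_left_mono)
  then show "u * Gext (Paths E I s t) g j y + (1 - u) * Gext (Paths E I s t) g j x \<le> B j"
    by (simp add: algebra_simps)
qed

lemma exists_step_nonneg:
  fixes x z :: "'q \<Rightarrow> real"
  assumes "finite P" and x_nonneg: "\<forall>q\<in>P. 0 \<le> x q" and z_nonneg: "\<forall>q\<in>P. x q = 0 \<longrightarrow> 0 \<le> z q"
  obtains u where "0 < u" and "\<forall>q\<in>P. 0 \<le> x q + u * z q"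
proof
  define U where "U = insert 1 ((\<lambda>q. x q / (\<bar>z q\<bar> + 1)) ` {q\<in>P. 0 < x q})"
  have "finite U"
    unfolding U_def using assms(1) by simp
  then show "0 < Min U"
    unfolding U_def by (subst Min_gr_iff) auto
  have "0 \<le> x q + Min U * z q" if "q \<in> P" for q
  proof (cases "x q = 0")
    case True
    then show ?thesis
      using z_nonneg that \<open>0 < Min U\<close> by simp
  next
    case False
    then have "0 < x q"
      using x_nonneg that by force
    then have "Min U * (\<bar>z q\<bar> + 1) \<le> x q"
      using Min_le[OF \<open>finite U\<close>, of "x q / (\<bar>z q\<bar> + 1)"] that
      by (simp add: U_def le_divide_eq add_pos_nonneg)
    moreover have "- (Min U * \<bar>z q\<bar>) \<le> Min U * z q"
      using mult_left_mono[of "- \<bar>z q\<bar>" "z q" "Min U"] \<open>0 < Min U\<close> by simp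
    ultimately show ?thesis
      using \<open>0 < Min U\<close> by (simp add: algebra_simps)
  qed
  then show "\<forall>q\<in>P. 0 \<le> x q + Min U * z q"
    by blast
qed

lemma equilibrium_variational_inequality:
  fixes c x y :: "'p \<Rightarrow> real"
  assumes "\<forall>p\<in>A. 0 \<le> x p" and "\<forall>p\<in>A. 0 \<le> y p" and "sum y A = sum x A" and "0 < sum x A"
    and min_cost: "\<forall>p\<in>A. 0 < x p \<longrightarrow> (\<forall>p'\<in>A. c p \<le> c p')"
  shows "0 \<le> (\<Sum>p\<in>A. c p * (y p - x p))"
proof -
  have "\<exists>p\<in>A. x p \<noteq> 0"
    using assms(4) sum.neutral by force
  then obtain p0 where "p0 \<in> A" "0 < x p0"
    using assms(1) by force
  define m where "m = c p0"
  have "c p * x p = m * x p" if "p \<in> A" for p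
  proof (cases "0 < x p")
    case True
    then have "c p = m"
      using min_cost that \<open>p0 \<in> A\<close> \<open>0 < x p0\<close> unfolding m_def by (meson order_antisym)
    then show ?thesis by simp
  next
    case False
    then have "x p = 0"
      using assms(1) that by force
    then show ?thesis by simp
  qed
  then have "(\<Sum>p\<in>A. c p * x p) = m * sum x A"
    unfolding sum_distrib_left by (rule sum.cong[OF refl])
  also have "\<dots> = (\<Sum>p\<in>A. m * y p)"
    by (simp add: assms(3) flip: sum_distrib_left)
  also have "\<dots> \<le> (\<Sum>p\<in>A. c p * y p)"
    using min_cost assms(2) \<open>p0 \<in> A\<close> \<open>0 < x p0\<close> unfolding m_def
    by (intro sum_mono mult_right_mono) auto
  finally show ?thesis
    by (simp add: right_diff_distrib sum_subtractf)
qed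

lemma WE_if_complementary_slackness:
  assumes "feasible_flow E I s t d x"
    and cost_eq: "\<forall>q\<in>Paths E I s t. cost J \<tau> g lam q x = \<nu> q + \<mu> (fst q)"
    and "\<forall>q\<in>Paths E I s t. 0 \<le> \<nu> q" and "\<forall>q\<in>Paths E I s t. 0 < x q \<longrightarrow> \<nu> q = 0"
  shows "WE E I s t d J \<tau> g lam x"
  unfolding WE_def
proof (intro conjI assms(1) ballI impI)
  fix i p p'
  assume "i \<in> I" "p \<in> paths E (s i) (t i)" "0 < x (i, p)" "p' \<in> paths E (s i) (t i)"
  then show "cost J \<tau> g lam (i, p) x \<le> cost J \<tau> g lam (i, p') x"
    using assms(2-4) by (simp add: Paths_def)
qed

lemma sum_cost_eq:
  "(\<Sum>q\<in>P. cost J \<tau> g lam q x * w q) = (\<Sum>q\<in>P. \<tau> q x * w q) + (\<Sum>j\<in>J. lam j * Gext P g j w)"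
proof -
  have "(\<Sum>q\<in>P. cost J \<tau> g lam q x * w q)
      = (\<Sum>q\<in>P. \<tau> q x * w q) + (\<Sum>q\<in>P. \<Sum>j\<in>J. lam j * (g q j * w q))"
    unfolding cost_def by (simp add: distrib_right sum.distrib sum_distrib_right mult.assoc)
  also have "(\<Sum>q\<in>P. \<Sum>j\<in>J. lam j * (g q j * w q)) = (\<Sum>j\<in>J. lam j * Gext P g j w)"
    unfolding Gext_def by (subst sum.swap) (simp add: sum_distrib_left)
  finally show ?thesis .
qed

lemma pareto_minimal_budget_tight:
  assumes "pareto_minimal E I s t d J g B" and "feasible_flow E I s t d x"
    and "respects_budget E I s t J g B x"
  shows "\<forall>j\<in>J. Gext (Paths E I s t) g j x = B j"
proof -
  have "feasible_budget E I s t d J g (\<lambda>j. Gext (Paths E I s t) g j x)"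
    using assms(2) unfolding feasible_budget_def respects_budget_def by auto
  then show ?thesis
    using assms(1,3) unfolding pareto_minimal_def respects_budget_def by blast
qed

locale flow_network =
  fixes E :: "('v \<times> 'v) set" and I :: "'i set" and s t :: "'i \<Rightarrow> 'v"
  assumes finite_commodities: "finite I"
    and finite_commodity_paths: "\<And>i. i \<in> I \<Longrightarrow> finite (paths E (s i) (t i))"
begin

lemma finite_Paths: "finite (Paths E I s t)"
  unfolding Paths_eq_Sigma using finite_commodities finite_commodity_paths by auto

lemma sum_Paths: "(\<Sum>q\<in>Paths E I s t. f q) = (\<Sum>i\<in>I. \<Sum>p\<in>paths E (s i) (t i). f (i, p))"
  unfolding Paths_eq_Sigma using finite_commodities finite_commodity_paths by (simp add: sum.Sigma)

lemma WE_variational_inequality: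
  assumes "WE E I s t d J \<tau> g lam x" and "feasible_flow E I s t d y" and "\<forall>i\<in>I. 0 < d i"
  shows "0 \<le> (\<Sum>q\<in>Paths E I s t. cost J \<tau> g lam q x * (y q - x q))"
  unfolding sum_Paths
proof (rule sum_nonneg)
  fix i
  assume "i \<in> I"
  with assms show "0 \<le> (\<Sum>p\<in>paths E (s i) (t i). cost J \<tau> g lam (i, p) x * (y (i, p) - x (i, p)))"
    unfolding WE_def feasible_flow_def Paths_def
    by (intro equilibrium_variational_inequality) auto
qed

lemma WE_tight_budget_imp_optimal:
  assumes WE: "WE E I s t d J \<tau> g lam x" and lam_nonneg: "\<forall>j\<in>J. 0 \<le> lam j"
    and demand_pos: "\<forall>i\<in>I. 0 < d i"
    and tight: "\<forall>j\<in>J. Gext (Paths E I s t) g j x = B j"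
    and gradient: "\<And>y. feasible_flow E I s t d y \<Longrightarrow>
      (\<Sum>q\<in>Paths E I s t. \<tau> q x * (y q - x q)) \<le> \<Phi> y - \<Phi> x"
  shows "optimal_budget_solution E I s t d J g B \<Phi> x"
  unfolding optimal_budget_solution_def
proof (intro conjI allI impI)
  show "feasible_flow E I s t d x"
    using WE by (simp add: WE_def)
  show "respects_budget E I s t J g B x"
    using tight by (simp add: respects_budget_def)
  fix y
  assume y: "feasible_flow E I s t d y \<and> respects_budget E I s t J g B y"
  have "(\<Sum>j\<in>J. lam j * Gext (Paths E I s t) g j (\<lambda>q. y q - x q)) \<le> 0"
  proof (rule sum_nonpos)
    fix j
    assume "j \<in> J"
    then have "Gext (Paths E I s t) g j (\<lambda>q. y q - x q) \<le> 0"
      using Gext_linear[of _ g j 1 y "-1" x] y tight by (simp add: respects_budget_def)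
    then show "lam j * Gext (Paths E I s t) g j (\<lambda>q. y q - x q) \<le> 0"
      using lam_nonneg \<open>j \<in> J\<close> by (simp add: mult_nonneg_nonpos)
  qed
  then show "\<Phi> x \<le> \<Phi> y"
    using WE_variational_inequality[OF WE _ demand_pos] gradient y
    unfolding sum_cost_eq by fastforce
qed

lemma optimal_imp_first_order_condition:
  assumes opt: "optimal_budget_solution E I s t d J g B \<Phi> x"
    and grad: "has_gradient_vecs (Paths E I s t) \<Phi> x D"
    and y: "feasible_flow E I s t d y" "respects_budget E I s t J g B y"
  shows "0 \<le> (\<Sum>q\<in>Paths E I s t. D q * (y q - x q))"
proof (rule gradient_nonneg_if_segment_minimum[OF grad])
  show "x \<in> vecs (Paths E I s t)" "y \<in> vecs (Paths E I s t)"
    using opt y by (auto simp: optimal_budget_solution_def feasible_flow_def)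
  fix u :: real
  assume "0 < u" "u \<le> 1"
  then have "feasible_flow E I s t d (\<lambda>q. u * y q + (1 - u) * x q)"
    and "respects_budget E I s t J g B (\<lambda>q. u * y q + (1 - u) * x q)"
    using opt y unfolding optimal_budget_solution_def
    by (auto intro!: feasible_flow_convex_combination respects_budget_convex_combination)
  then show "\<Phi> x \<le> \<Phi> (\<lambda>q. u * y q + (1 - u) * x q)"
    using opt unfolding optimal_budget_solution_def by blast
qed

lemma feasible_direction:
  assumes x: "feasible_flow E I s t d x" and x_budget: "respects_budget E I s t J g B x"
    and z: "z \<in> vecs (Paths E I s t)"
    and z_nonneg: "\<forall>q\<in>Paths E I s t. x q = 0 \<longrightarrow> 0 \<le> z q"
    and z_demand: "\<forall>i\<in>I. (\<Sum>p\<in>paths E (s i) (t i). z (i, p)) = 0"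
    and z_budget: "\<forall>j\<in>J. Gext (Paths E I s t) g j z \<le> 0"
  obtains u where "0 < u" and "feasible_flow E I s t d (\<lambda>q. x q + u * z q)"
    and "respects_budget E I s t J g B (\<lambda>q. x q + u * z q)"
proof -
  obtain u where "0 < u" and nonneg: "\<forall>q\<in>Paths E I s t. 0 \<le> x q + u * z q"
    using exists_step_nonneg[OF finite_Paths _ z_nonneg] x by (auto simp: feasible_flow_def)
  have "feasible_flow E I s t d (\<lambda>q. x q + u * z q)"
    using x z z_demand nonneg
    by (simp add: feasible_flow_def vecs_def sum.distrib flip: sum_distrib_left)
  moreover have "respects_budget E I s t J g B (\<lambda>q. x q + u * z q)"
    unfolding respects_budget_def
  proof
    fix j
    assume "j \<in> J"
    then have "Gext (Paths E I s t) g j x \<le> B j" and "u * Gext (Paths E I s t) g j z \<le> 0"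
      using x_budget z_budget \<open>0 < u\<close> by (auto simp: respects_budget_def mult_nonneg_nonpos)
    then show "Gext (Paths E I s t) g j (\<lambda>q. x q + u * z q) \<le> B j"
      using Gext_linear[of _ g j 1 x u z] by simp
  qed
  ultimately show ?thesis
    using \<open>0 < u\<close> that by blast
qed

lemma variational_inequality_on_tangent_cone:
  assumes x: "feasible_flow E I s t d x" and x_budget: "respects_budget E I s t J g B x"
    and VI: "\<And>y. feasible_flow E I s t d y \<Longrightarrow> respects_budget E I s t J g B y \<Longrightarrow>
      0 \<le> (\<Sum>q\<in>Paths E I s t. \<tau> q x * (y q - x q))"
    and z_nonneg: "\<forall>q\<in>Paths E I s t. x q = 0 \<longrightarrow> 0 \<le> z q"
    and z_demand: "\<forall>i\<in>I. (\<Sum>p\<in>paths E (s i) (t i). z (i, p)) = 0"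
    and z_budget: "\<forall>j\<in>J. Gext (Paths E I s t) g j z \<le> 0"
  shows "0 \<le> (\<Sum>q\<in>Paths E I s t. \<tau> q x * z q)"
proof -
  define z0 where "z0 q = (if q \<in> Paths E I s t then z q else 0)" for q
  have sum_z0: "(\<Sum>q\<in>Paths E I s t. f q * z0 q) = (\<Sum>q\<in>Paths E I s t. f q * z q)" for f
    by (simp add: z0_def)
  have "z0 \<in> vecs (Paths E I s t)"
    by (simp add: z0_def vecs_def)
  moreover have "\<forall>q\<in>Paths E I s t. x q = 0 \<longrightarrow> 0 \<le> z0 q"
    using z_nonneg by (simp add: z0_def)
  moreover have "\<forall>i\<in>I. (\<Sum>p\<in>paths E (s i) (t i). z0 (i, p)) = 0"
    using z_demand by (simp add: z0_def Paths_def)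
  moreover have "\<forall>j\<in>J. Gext (Paths E I s t) g j z0 \<le> 0"
    using z_budget by (simp add: Gext_def sum_z0)
  ultimately obtain u where "0 < u"
    and "feasible_flow E I s t d (\<lambda>q. x q + u * z0 q)"
    and "respects_budget E I s t J g B (\<lambda>q. x q + u * z0 q)"
    by (rule feasible_direction[OF x x_budget])
  then have "0 \<le> (\<Sum>q\<in>Paths E I s t. \<tau> q x * (u * z0 q))"
    using VI by fastforce
  then have "0 \<le> u * (\<Sum>q\<in>Paths E I s t. \<tau> q x * z q)"
    by (simp add: sum_distrib_left mult.left_commute flip: sum_z0)
  with \<open>0 < u\<close> show ?thesis
    by (simp add: zero_le_mult_iff)
qed

lemma variational_inequality_imp_implementable:
  assumes "finite J" and x: "feasible_flow E I s t d x" and x_budget: "respects_budget E I s t J g B x"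
    and VI: "\<And>y. feasible_flow E I s t d y \<Longrightarrow> respects_budget E I s t J g B y \<Longrightarrow>
      0 \<le> (\<Sum>q\<in>Paths E I s t. \<tau> q x * (y q - x q))"
  shows "implementable E I s t d J \<tau> g x"
proof -
  define Z where "Z = {q \<in> Paths E I s t. x q = 0}"
  \<comment> \<open>The cone of feasible directions at x, written for Farkas' lemma: inequalities Inl q
    (z q \<ge> 0 on unused paths q \<in> Z) and Inr j (G_j z \<le> 0), equalities b i (demand of i kept).\<close>
  define a where "a = case_sum (\<lambda>r q. of_bool (q = r)) (\<lambda>j q. - g q j)"
  define b where "b i q = (of_bool (fst q = i) :: real)" for i and q :: "'i \<times> 'v list"
  have "finite Z"
    unfolding Z_def using finite_Paths by simp
  have "0 \<le> (\<Sum>q\<in>Paths E I s t. \<tau> q x * z q)"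
    if z_cone: "\<forall>k\<in>Z <+> J. 0 \<le> (\<Sum>q\<in>Paths E I s t. a k q * z q)"
      and z_demand: "\<forall>i\<in>I. (\<Sum>q\<in>Paths E I s t. b i q * z q) = 0" for z
  proof (rule variational_inequality_on_tangent_cone[where \<tau> = \<tau>, OF x x_budget VI])
    show "\<forall>q\<in>Paths E I s t. x q = 0 \<longrightarrow> 0 \<le> z q"
      using z_cone finite_Paths by (auto simp: Plus_def ball_Un a_def Z_def)
    show "\<forall>i\<in>I. (\<Sum>p\<in>paths E (s i) (t i). z (i, p)) = 0"
      using z_demand finite_commodities by (simp add: sum_Paths b_def flip: sum_distrib_left)
    show "\<forall>j\<in>J. Gext (Paths E I s t) g j z \<le> 0"
      using z_cone by (simp add: Plus_def ball_Un a_def Gext_def sum_negf)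
  qed
  from farkas_with_equalities[OF finite_Plus[OF \<open>finite Z\<close> \<open>finite J\<close>]
      finite_commodities finite_Paths this]
  obtain l \<mu> where l_nonneg: "\<forall>k\<in>Z <+> J. 0 \<le> l k"
    and \<tau>_eq: "\<forall>q\<in>Paths E I s t. \<tau> q x
      = (\<Sum>k\<in>Z <+> J. l k * a k q) + (\<Sum>i\<in>I. \<mu> i * b i q)"
    by blast
  define lam where "lam j = l (Inr j)" for j
  have "cost J \<tau> g lam q x = (if q \<in> Z then l (Inl q) else 0) + \<mu> (fst q)"
    if "q \<in> Paths E I s t" for q
    using that \<tau>_eq \<open>finite Z\<close> \<open>finite J\<close> finite_commodities
    by (auto simp: cost_def lam_def sum.Plus a_def b_def Paths_def sum_negf)
  with l_nonneg have "WE E I s t d J \<tau> g lam x"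
    by (intro WE_if_complementary_slackness[OF x, where \<nu> = "\<lambda>q. if q \<in> Z then l (Inl q) else 0"])
      (auto simp: Z_def Plus_def)
  moreover have "\<forall>j\<in>J. 0 \<le> lam j"
    using l_nonneg by (simp add: lam_def Plus_def)
  ultimately show ?thesis
    unfolding implementable_def by blast
qed

end

theorem lemma4p4:
  fixes V :: "'v set" and E :: "('v \<times> 'v) set"
    and I :: "'i set" and s t :: "'i \<Rightarrow> 'v" and d :: "'i \<Rightarrow> real"
    and J :: "'j set" and g :: "'i \<times> 'v list \<Rightarrow> 'j \<Rightarrow> real"
    and \<tau> :: "'i \<times> 'v list \<Rightarrow> ('i \<times> 'v list \<Rightarrow> real) \<Rightarrow> real"
    and \<Phi> :: "('i \<times> 'v list \<Rightarrow> real) \<Rightarrow> real"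
    and B :: "'j \<Rightarrow> real"
    and x :: "'i \<times> 'v list \<Rightarrow> real"
  assumes finV: "finite V" and EV: "E \<subseteq> V \<times> V"
    and finI: "finite I" and stV: "\<forall>i \<in> I. s i \<in> V \<and> t i \<in> V"
    and dpos: "\<forall>i \<in> I. 0 < d i"
    and finJ: "finite J"
    and gnn: "\<forall>q \<in> Paths E I s t. \<forall>j \<in> J. 0 \<le> g q j"
    and Phi_diff: "\<forall>y \<in> vecs (Paths E I s t). differentiable_vecs (Paths E I s t) \<Phi> y"
    and Phi_pot: "\<forall>y. feasible_flow E I s t d y \<longrightarrow>
                     (\<forall>q \<in> Paths E I s t. has_partial_deriv \<Phi> q y (\<tau> q y))"
    and Phi_convex: "convex_vecs (Paths E I s t) \<Phi>"
    and B_pm: "pareto_minimal E I s t d J g B"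
    and x_feas: "feasible_flow E I s t d x"
  shows "(implementable E I s t d J \<tau> g x \<and> respects_budget E I s t J g B x) \<longleftrightarrow>
         optimal_budget_solution E I s t d J g B \<Phi> x"
proof -
  interpret flow_network E I s t
    using finI finite_paths[OF finV EV] stV by unfold_locales auto
  have x_vec: "x \<in> vecs (Paths E I s t)"
    using x_feas by (simp add: feasible_flow_def)
  obtain D where D: "has_gradient_vecs (Paths E I s t) \<Phi> x D"
    using Phi_diff x_vec by (auto simp: differentiable_vecs_iff_has_gradient)
  have "D q = \<tau> q x" if "q \<in> Paths E I s t" for q
    using has_gradient_vecs_partial_deriv[OF D x_vec that finite_Paths] Phi_pot x_feas that
    unfolding has_partial_deriv_def by (blast intro: DERIV_unique)
  then have D_eq: "(\<Sum>q\<in>Paths E I s t. D q * w q) = (\<Sum>q\<in>Paths E I s t. \<tau> q x * w q)" for w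
    by simp
  show ?thesis
  proof
    assume "implementable E I s t d J \<tau> g x \<and> respects_budget E I s t J g B x"
    then show "optimal_budget_solution E I s t d J g B \<Phi> x"
      using pareto_minimal_budget_tight[OF B_pm x_feas] dpos
        convex_vecs_gradient_inequality[OF Phi_convex D x_vec]
      by (auto simp: implementable_def D_eq feasible_flow_def intro!: WE_tight_budget_imp_optimal)
  next
    assume opt: "optimal_budget_solution E I s t d J g B \<Phi> x"
    then show "implementable E I s t d J \<tau> g x \<and> respects_budget E I s t J g B x"
      using optimal_imp_first_order_condition[OF opt D]
      by (auto simp: optimal_budget_solution_def D_eq
          intro!: variational_inequality_imp_implementable[OF finJ x_feas])
  qed
qed

end
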